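(* Let $m\ge 2$ be an integer and let $C=uRM(m)\subseteq \mathbb{F}_2^{2^m}$ be the classical binary linear code defined in the context (the code cut out by the weight-4 bulk checks and the boundary checks $S(w,t)$ on a $2^b\times 2^a$ grid). Then $C$ is equivalent, up to a permutation of coordinates, to the first-order Reed–Muller code $RM(1,m)$; in particular $C$ has parameters $[n,k,d]=[2^m,\,m+1,\,2^{m-1}]$.
   Context: Let $a=\lceil m/2\rceil$ and $b=\lfloor m/2\rfloor$, so $a+b=m$. Place $2^m$ bits on a rectangular grid with $2^b$ rows and $2^a$ columns; bits are indexed by grid positions $(i,j)$, $1\le i\le 2^b$, $1\le j\le 2^a$, with row $i=1$ the top row and column $j=1$ the leftmost column. A check is a subset of grid positions; a vector $x\in\mathbb{F}_2^{2^m}$ satisfies the check if the sum of $x$ over that subset is $0$ mod 2. Bulk checks: for every $1\le i<2^b$, $1\le j<2^a$, the 4-element set $\{(i,j),(i+1,j),(i,j+1),(i+1,j+1)\}$. Boundary checks: for a line of $L=2^n$ positions labelled $1,\dots,L$, and for each $s\in\{1,\dots,n-1\}$, $w=2^s$, and each integer $t$ with $-L/(2w)+1\le t\le L/(2w)-1$, define the 4-element set $S(w,t)=\{L/2-w/2+wt,\ L/2-w/2+wt+1,\ L/2+w/2+wt,\ L/2+w/2+wt+1\}$. The horizontal boundary checks are the sets $S(w,t)$ (with $n=a$) placed on the top row (position $j$ of the line being $(1,j)$); the vertical boundary checks are the sets $S(w,t)$ (with $n=b$) placed on the leftmost column (position $i$ of the line being $(i,1)$). $uRM(m)$ is the set of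 all $x\in\mathbb{F}_2^{2^m}$ satisfying all bulk and boundary checks. $RM(1,m)$ is the binary code of length $2^m$ consisting of the evaluation vectors $(c_0+c\cdot v)_{v\in\mathbb{F}_2^m}$ over all $c_0\in\mathbb{F}_2$, $c\in\mathbb{F}_2^m$. *)

theory Defs
  imports Main
begin

definition ca :: "nat \<Rightarrow> nat" where "ca m = (m + 1) div 2"
definition cb :: "nat \<Rightarrow> nat" where "cb m = m div 2"

definition grid :: "nat \<Rightarrow> (int \<times> int) set" where
  "grid m = {1..2 ^ cb m} \<times> {1..2 ^ ca m}"

definition bulk_checks :: "nat \<Rightarrow> (int \<times> int) set set" where
  "bulk_checks m = {{(i,j), (i+1,j), (i,j+1), (i+1,j+1)} | i j.
      1 \<le> i \<and> i < 2 ^ cb m \<and> 1 \<le> j \<and> j < 2 ^ ca m}"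

definition Sset :: "int \<Rightarrow> int \<Rightarrow> int \<Rightarrow> int set" where
  "Sset L w t = {L div 2 - w div 2 + w * t, L div 2 - w div 2 + w * t + 1,
                 L div 2 + w div 2 + w * t, L div 2 + w div 2 + w * t + 1}"

definition bd_sets :: "nat \<Rightarrow> int set set" where
  "bd_sets n = {Sset (2 ^ n) (2 ^ s) t | s t.
      1 \<le> s \<and> s \<le> n - 1 \<and>
      - ((2 ^ n) div (2 * 2 ^ s)) + 1 \<le> t \<and> t \<le> (2 ^ n) div (2 * 2 ^ s) - 1}"

definition hor_checks :: "nat \<Rightarrow> (int \<times> int) set set" where
  "hor_checks m = (\<lambda>T. (\<lambda>j. (1, j)) ` T) ` bd_sets (ca m)"

definition ver_checks :: "nat \<Rightarrow> (int \<times> int) set set" where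
  "ver_checks m = (\<lambda>T. (\<lambda>i. (i, 1)) ` T) ` bd_sets (cb m)"

definition all_checks :: "nat \<Rightarrow> (int \<times> int) set set" where
  "all_checks m = bulk_checks m \<union> hor_checks m \<union> ver_checks m"

text \<open>A word is a 0/1 function (bool) vanishing outside the coordinate set;
  it satisfies a check if its sum over the check is 0 mod 2.\<close>
definition satisfies :: "('a \<Rightarrow> bool) \<Rightarrow> 'a set \<Rightarrow> bool" where
  "satisfies x S \<longleftrightarrow> even (card {p \<in> S. x p})"

definition uRM :: "nat \<Rightarrow> (int \<times> int \<Rightarrow> bool) set" where
  "uRM m = {x. (\<forall>p. x p \<longrightarrow> p \<in> grid m) \<and> (\<forall>S \<in> all_checks m. satisfies x S)}"

text \<open>F_2^m as bool lists of length m; RM(1,m) as evaluation vectors indexed by them.\<close>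
definition vecs :: "nat \<Rightarrow> bool list set" where
  "vecs m = {v. length v = m}"

definition dotF2 :: "bool list \<Rightarrow> bool list \<Rightarrow> bool" where
  "dotF2 c v \<longleftrightarrow> odd (card {i. i < length c \<and> c ! i \<and> v ! i})"

definition RM1 :: "nat \<Rightarrow> (bool list \<Rightarrow> bool) set" where
  "RM1 m = {y. \<exists>c0 c. length c = m \<and>
      y = (\<lambda>v. if v \<in> vecs m then (c0 \<noteq> dotF2 c v) else False)}"

definition hdist :: "('a \<Rightarrow> bool) \<Rightarrow> ('a \<Rightarrow> bool) \<Rightarrow> nat" where
  "hdist x y = card {p. x p \<noteq> y p}"

definition min_dist :: "('a \<Rightarrow> bool) set \<Rightarrow> nat" where
  "min_dist C = Min {hdist x y | x y. x \<in> C \<and> y \<in> C \<and> x \<noteq> y}"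

end

theory Submission
  imports Defs
begin

text \<open>
  The bulk checks say that every 2 \<times> 2 square of the grid has even weight, so a codeword
  satisfies x(i,j) = x(i,1) + x(1,j) + x(1,1) and is determined by its top row and its left
  column. On a line, written 0-based as g(u) = f(u + 1), the boundary check S(2^(v+1), t)
  compares the jumps g(u - 1) + g(u) at u = 2^v(2k + 1) and u = 2^v(2k + 3); together they say
  that the jump at u depends only on the 2-adic valuation of u. An affine function of the
  binary digits of u has this property, because going from u - 1 to u flips exactly the
  digits of index at most v, and it is the only one with its values at 0 and at the powers of 2.
  Hence a codeword is c0 + <r, bits(i - 1)> + <s, bits(j - 1)>, an affine function of the
  m-bit label bits(i - 1) @ bits(j - 1), that is, a word of RM(1,m). Two distinct affine
  functions differ by a non-constant affine function, of weight 2^(m-1), or by the constant 1.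
\<close>

primrec parity :: "nat \<Rightarrow> (nat \<Rightarrow> bool) \<Rightarrow> bool" where
  "parity 0 P = False"
| "parity (Suc n) P = (parity n P \<noteq> P n)"

lemma odd_card_eq_parity: "odd (card {i. i < n \<and> P i}) = parity n P"
proof (induction n)
  case (Suc n)
  have "{i. i < Suc n \<and> P i} = (if P n then insert n {i. i < n \<and> P i} else {i. i < n \<and> P i})"
    by (auto simp: less_Suc_eq)
  then show ?case using Suc by (simp add: card_insert_if)
qed simp

lemma parity_cong: "(\<And>i. i < n \<Longrightarrow> P i = Q i) \<Longrightarrow> parity n P = parity n Q"
  by (induction n) auto

lemma parity_neq: "(parity n P \<noteq> parity n Q) = parity n (\<lambda>i. P i \<noteq> Q i)"
  by (induction n) auto

lemma parity_False [simp]: "parity n (\<lambda>_. False) = False"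
  by (induction n) auto

lemma parity_eq_single: "parity n (\<lambda>i. P i \<and> i = k) = (k < n \<and> P k)"
  by (induction n) (auto simp: less_Suc_eq)

lemma parity_add: "parity (a + b) P = (parity a P \<noteq> parity b (\<lambda>i. P (a + i)))"
  by (induction b) auto

lemma dotF2_eq_parity: "dotF2 c v = parity (length c) (\<lambda>i. c ! i \<and> v ! i)"
  unfolding dotF2_def odd_card_eq_parity ..

lemma satisfies_four_iff:
  assumes "distinct [a, b, c, d]"
  shows "satisfies x {a, b, c, d} \<longleftrightarrow> (x a \<noteq> x b) = (x c \<noteq> x d)"
proof -
  have e: "{p \<in> {a, b, c, d}. x p} = (if x a then {a} else {}) \<union> (if x b then {b} else {})
      \<union> (if x c then {c} else {}) \<union> (if x d then {d} else {})"
    by auto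
  show ?thesis
    using assms unfolding satisfies_def e
    by (cases "x a"; cases "x b"; cases "x c"; cases "x d") (auto simp: card_insert_if)
qed

lemma satisfies_image:
  assumes "inj f"
  shows "satisfies x (f ` T) = satisfies (x \<circ> f) T"
proof -
  have "{p \<in> f ` T. x p} = f ` {j \<in> T. x (f j)}" by auto
  then show ?thesis
    unfolding satisfies_def using card_image[OF inj_on_subset[OF assms]] by simp
qed

section \<open>Affine functions of binary digits and the boundary checks\<close>

definition lin_bits :: "nat \<Rightarrow> (nat \<Rightarrow> bool) \<Rightarrow> nat \<Rightarrow> bool" where
  "lin_bits n d u = parity n (\<lambda>k. d k \<and> bit u k)"

lemma lin_bits_cong: "(\<And>k. k < n \<Longrightarrow> d k = d' k) \<Longrightarrow> lin_bits n d u = lin_bits n d' u"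
  unfolding lin_bits_def by (rule parity_cong) auto

lemma lin_bits_0 [simp]: "lin_bits n d 0 = False"
  by (simp add: lin_bits_def)

lemma lin_bits_exp: "k < n \<Longrightarrow> lin_bits n d (2 ^ k) = d k"
  by (simp add: lin_bits_def bit_exp_iff parity_eq_single conj_commute)

lemma bit_Suc_neq_iff: "(bit (Suc w) i \<noteq> bit w i) \<longleftrightarrow> 2 ^ i dvd Suc w"
proof -
  have "Suc w div 2 ^ i = (if 2 ^ i dvd Suc w then Suc (w div 2 ^ i) else w div 2 ^ i)"
    by (simp add: div_Suc dvd_eq_mod_eq_0)
  then show ?thesis by (simp add: bit_iff_odd)
qed

lemma lin_bits_Suc_neq:
  "(lin_bits n d (Suc w) \<noteq> lin_bits n d w) = parity n (\<lambda>i. d i \<and> 2 ^ i dvd Suc w)"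
  unfolding lin_bits_def parity_neq by (rule parity_cong) (use bit_Suc_neq_iff in blast)

lemma exp_dvd_exp_mult_odd_iff:
  fixes q :: nat
  assumes "odd q"
  shows "2 ^ i dvd 2 ^ v * q \<longleftrightarrow> i \<le> v"
proof
  assume "2 ^ i dvd 2 ^ v * q"
  show "i \<le> v"
  proof (rule ccontr)
    assume "\<not> i \<le> v"
    then have "2 ^ Suc v dvd (2::nat) ^ i" by (intro le_imp_power_dvd) simp
    then have "2 ^ Suc v dvd 2 ^ v * q" using \<open>2 ^ i dvd 2 ^ v * q\<close> by (rule dvd_trans)
    with assms show False by simp
  qed
qed (simp add: le_imp_power_dvd)

definition jump :: "(nat \<Rightarrow> bool) \<Rightarrow> nat \<Rightarrow> bool" where
  "jump g u \<longleftrightarrow> g (u - 1) \<noteq> g u"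

definition jumps_by_valuation :: "nat \<Rightarrow> (nat \<Rightarrow> bool) \<Rightarrow> bool" where
  "jumps_by_valuation n g \<longleftrightarrow>
     (\<forall>v k. 2 ^ v * (2 * k + 1) < (2::nat) ^ n \<longrightarrow> jump g (2 ^ v * (2 * k + 1)) = jump g (2 ^ v))"

lemma exp_mult_odd_cases:
  assumes "0 < (u::nat)"
  obtains v k where "u = 2 ^ v * (2 * k + 1)"
  using assms
proof (induction u arbitrary: thesis rule: less_induct)
  case (less u)
  show ?case
  proof (cases "even u")
    case True
    then obtain w where w: "u = 2 * w" by blast
    with less.prems have "0 < w" "w < u" by auto
    then obtain v k where "w = 2 ^ v * (2 * k + 1)" using less.IH by blast
    with w have "u = 2 ^ Suc v * (2 * k + 1)" by simp
    then show ?thesis by (rule less.prems)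
  next
    case False
    then have "u = 2 ^ 0 * (2 * (u div 2) + 1)" by simp
    then show ?thesis by (rule less.prems)
  qed
qed

lemma jump_lin_bits:
  "jump (\<lambda>u. e \<noteq> lin_bits n d u) (2 ^ v * (2 * k + 1)) = parity n (\<lambda>i. d i \<and> i \<le> v)"
proof -
  define u where "u = 2 ^ v * (2 * k + 1)"
  have dvd_iff: "2 ^ i dvd u \<longleftrightarrow> i \<le> v" for i
    unfolding u_def by (rule exp_dvd_exp_mult_odd_iff) simp
  have "Suc (u - 1) = u" by (simp add: u_def)
  then have "jump (\<lambda>u. e \<noteq> lin_bits n d u) u = parity n (\<lambda>i. d i \<and> 2 ^ i dvd u)"
    using lin_bits_Suc_neq[of n d "u - 1"] unfolding jump_def by auto
  also have "\<dots> = parity n (\<lambda>i. d i \<and> i \<le> v)"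
    by (rule parity_cong) (simp only: dvd_iff)
  finally show ?thesis unfolding u_def .
qed

lemma jumps_by_valuation_lin_bits: "jumps_by_valuation n (\<lambda>u. e \<noteq> lin_bits n d u)"
  unfolding jumps_by_valuation_def jump_lin_bits using jump_lin_bits[of e n d v 0 for v] by simp

lemma jumps_by_valuation_cong:
  assumes "\<And>u. u < 2 ^ n \<Longrightarrow> g u = h u"
  shows "jumps_by_valuation n g = jumps_by_valuation n h"
proof -
  have "jump g (2 ^ v * (2 * k + 1)) = jump h (2 ^ v * (2 * k + 1)) \<and>
      jump g (2 ^ v) = jump h (2 ^ v)"
    if "2 ^ v * (2 * k + 1) < (2::nat) ^ n" for v k
  proof -
    have "(2::nat) ^ v \<le> 2 ^ v * (2 * k + 1)" by simp
    with that have "2 ^ v - 1 < (2::nat) ^ n" "2 ^ v < (2::nat) ^ n"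
      "2 ^ v * (2 * k + 1) - 1 < (2::nat) ^ n"
      by linarith+
    with that show ?thesis unfolding jump_def by (simp add: assms)
  qed
  then show ?thesis unfolding jumps_by_valuation_def by metis
qed

lemma jumps_by_valuation_unique:
  assumes "jumps_by_valuation n g" "jumps_by_valuation n h"
    and "g 0 = h 0" "\<And>i. i < n \<Longrightarrow> g (2 ^ i) = h (2 ^ i)"
    and "u < 2 ^ n"
  shows "g u = h u"
  using assms(5)
proof (induction u rule: less_induct)
  case (less u)
  show ?case
  proof (cases "u = 0")
    case True
    with assms(3) show ?thesis by simp
  next
    case False
    then obtain v k where u: "u = 2 ^ v * (2 * k + 1)" using exp_mult_odd_cases by blast
    have "(2::nat) ^ v \<le> u" unfolding u by simp
    with less.prems have "(2::nat) ^ v < 2 ^ n" by linarith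
    then have "v < n" by simp
    show ?thesis
    proof (cases "k = 0")
      case True
      with u assms(4) \<open>v < n\<close> show ?thesis by simp
    next
      case False
      then have "(2::nat) ^ v < u" unfolding u by simp
      then have IH: "g (u - 1) = h (u - 1)" "g (2 ^ v - 1) = h (2 ^ v - 1)" "g (2 ^ v) = h (2 ^ v)"
        using less.IH less.prems by auto
      have "jump g u = jump h u"
        using assms(1,2) less.prems IH(2,3) unfolding jumps_by_valuation_def jump_def u by metis
      with IH(1) show ?thesis unfolding jump_def by auto
    qed
  qed
qed

lemma jumps_by_valuation_imp_lin_bits:
  assumes "jumps_by_valuation n g"
  shows "\<exists>e d. \<forall>u < 2 ^ n. g u = (e \<noteq> lin_bits n d u)"
proof (intro exI allI impI)
  fix u :: nat
  assume "u < 2 ^ n"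
  show "g u = (g 0 \<noteq> lin_bits n (\<lambda>i. g (2 ^ i) \<noteq> g 0) u)"
    by (rule jumps_by_valuation_unique[OF assms jumps_by_valuation_lin_bits])
      (auto simp: lin_bits_exp \<open>u < 2 ^ n\<close>)
qed

definition boundary_quad :: "nat \<Rightarrow> nat \<Rightarrow> int set" where
  "boundary_quad v k = {int (2 ^ v * (2 * k + 1)), int (2 ^ v * (2 * k + 1)) + 1,
                        int (2 ^ v * (2 * k + 3)), int (2 ^ v * (2 * k + 3)) + 1}"

lemma Sset_eq_boundary_quad:
  "Sset (2 ^ (v + 2 + r)) (2 ^ Suc v) (int k + 1 - 2 ^ r) = boundary_quad v k"
proof -
  have "(2::int) ^ (v + 2 + r) div 2 = 2 * 2 ^ v * 2 ^ r" "(2::int) ^ Suc v div 2 = 2 ^ v"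
    by (simp_all add: power_add)
  then show ?thesis
    unfolding Sset_def boundary_quad_def by (simp add: algebra_simps)
qed

lemma exp_mult_less_exp_iff:
  "2 ^ v * (2 * k + 3) < (2::nat) ^ (v + 2 + r) \<longleftrightarrow> 2 * int k + 3 < 4 * 2 ^ r"
proof -
  have "(2::nat) ^ (v + 2 + r) = 2 ^ v * (4 * 2 ^ r)" by (simp add: power_add)
  then have "2 ^ v * (2 * k + 3) < (2::nat) ^ (v + 2 + r) \<longleftrightarrow> 2 * k + 3 < 4 * 2 ^ r" by simp
  also have "\<dots> \<longleftrightarrow> int (2 * k + 3) < int (4 * 2 ^ r)" by (rule of_nat_less_iff[symmetric])
  also have "\<dots> \<longleftrightarrow> 2 * int k + 3 < 4 * 2 ^ r" by simp
  finally show ?thesis .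
qed

lemma mem_bd_sets_iff:
  "T \<in> bd_sets n \<longleftrightarrow>
     (\<exists>v k. v + 2 \<le> n \<and> 2 ^ v * (2 * k + 3) < (2::nat) ^ n \<and> T = boundary_quad v k)"
proof
  assume "T \<in> bd_sets n"
  then obtain s t where s: "1 \<le> s" "s \<le> n - 1"
    and t: "- ((2 ^ n) div (2 * 2 ^ s)) + 1 \<le> t" "t \<le> (2 ^ n) div (2 * 2 ^ s) - (1::int)"
    and T: "T = Sset (2 ^ n) (2 ^ s) t"
    unfolding bd_sets_def by blast
  define v r where "v = s - 1" and "r = n - (v + 2)"
  have s_eq: "s = Suc v" and n_eq: "n = v + 2 + r" using s by (auto simp: v_def r_def)
  have half: "(2::int) ^ n div (2 * 2 ^ s) = 2 ^ r"
    unfolding n_eq s_eq by (simp add: power_add)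
  define k where "k = nat (t - 1 + 2 ^ r)"
  have t_eq: "t = int k + 1 - 2 ^ r" using t half by (simp add: k_def)
  have "2 ^ v * (2 * k + 3) < (2::nat) ^ n"
    unfolding n_eq exp_mult_less_exp_iff using t half t_eq by simp
  moreover have "T = boundary_quad v k"
    unfolding T s_eq n_eq t_eq Sset_eq_boundary_quad ..
  moreover have "v + 2 \<le> n" using n_eq by simp
  ultimately show "\<exists>v k. v + 2 \<le> n \<and> 2 ^ v * (2 * k + 3) < (2::nat) ^ n \<and> T = boundary_quad v k"
    by blast
next
  assume "\<exists>v k. v + 2 \<le> n \<and> 2 ^ v * (2 * k + 3) < (2::nat) ^ n \<and> T = boundary_quad v k"
  then obtain v k where v: "v + 2 \<le> n" and k: "2 ^ v * (2 * k + 3) < (2::nat) ^ n"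
    and T: "T = boundary_quad v k"
    by blast
  define r where "r = n - (v + 2)"
  have n_eq: "n = v + 2 + r" using v by (simp add: r_def)
  have half: "(2::int) ^ n div (2 * 2 ^ Suc v) = 2 ^ r"
    unfolding n_eq by (simp add: power_add)
  have "2 * int k + 3 < 4 * 2 ^ r" using k unfolding n_eq exp_mult_less_exp_iff .
  then have "- ((2 ^ n) div (2 * 2 ^ Suc v)) + 1 \<le> int k + 1 - 2 ^ r"
    "int k + 1 - 2 ^ r \<le> (2 ^ n) div (2 * 2 ^ Suc v) - (1::int)"
    unfolding half by simp_all
  moreover have "T = Sset (2 ^ n) (2 ^ Suc v) (int k + 1 - 2 ^ r)"
    unfolding T n_eq Sset_eq_boundary_quad ..
  moreover have "1 \<le> Suc v" "Suc v \<le> n - 1" using v by simp_all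
  ultimately show "T \<in> bd_sets n"
    unfolding bd_sets_def by blast
qed

lemma satisfies_boundary_quad_iff:
  "satisfies f (boundary_quad v k) \<longleftrightarrow>
     jump (\<lambda>u. f (int u + 1)) (2 ^ v * (2 * k + 1)) =
     jump (\<lambda>u. f (int u + 1)) (2 ^ v * (2 * k + 3))"
proof -
  define a b where "a = 2 ^ v * (2 * k + 1)" and "b = 2 ^ v * (2 * k + 3)"
  have "b = a + 2 * 2 ^ v" by (simp add: a_def b_def algebra_simps)
  moreover have "(2::nat) \<le> 2 * 2 ^ v" by simp
  ultimately have "a + 1 < b" by linarith
  then have "distinct [int a, int a + 1, int b, int b + 1]" by simp
  moreover have "1 \<le> a" "1 \<le> b" unfolding a_def b_def by (simp_all add: Suc_le_eq)
  then have "jump (\<lambda>u. f (int u + 1)) a = (f (int a) \<noteq> f (int a + 1))"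
    "jump (\<lambda>u. f (int u + 1)) b = (f (int b) \<noteq> f (int b + 1))"
    unfolding jump_def by (simp_all add: of_nat_diff)
  ultimately show ?thesis
    unfolding boundary_quad_def a_def[symmetric] b_def[symmetric] by (simp add: satisfies_four_iff)
qed

lemma boundary_checks_iff_jumps_by_valuation:
  "(\<forall>T \<in> bd_sets n. satisfies f T) \<longleftrightarrow> jumps_by_valuation n (\<lambda>u. f (int u + 1))"
  (is "?checks \<longleftrightarrow> jumps_by_valuation n ?g")
proof
  assume ?checks
  have "jump ?g (2 ^ v * (2 * k + 1)) = jump ?g (2 ^ v)"
    if "2 ^ v * (2 * k + 1) < (2::nat) ^ n" for v k
    using that
  proof (induction k)
    case (Suc k)
    have odd_Suc: "2 * Suc k + 1 = 2 * k + 3" by simp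
    with Suc.prems have less: "2 ^ v * (2 * k + 3) < (2::nat) ^ n" by metis
    have "(2::nat) ^ Suc v < 2 ^ v * (2 * k + 3)" by simp
    with less have "(2::nat) ^ Suc v < 2 ^ n" by linarith
    then have "v + 2 \<le> n" using power_less_imp_less_exp[of "2::nat" "Suc v" n] by simp
    with less \<open>?checks\<close> have "satisfies f (boundary_quad v k)"
      using mem_bd_sets_iff by blast
    moreover have "2 ^ v * (2 * k + 1) \<le> (2::nat) ^ v * (2 * k + 3)" by (rule mult_le_mono2) simp
    with less have "2 ^ v * (2 * k + 1) < (2::nat) ^ n" by linarith
    ultimately have "jump ?g (2 ^ v * (2 * k + 3)) = jump ?g (2 ^ v)"
      using Suc.IH unfolding satisfies_boundary_quad_iff by blast
    then show ?case unfolding odd_Suc .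
  qed simp
  then show "jumps_by_valuation n ?g"
    unfolding jumps_by_valuation_def by blast
next
  assume jumps: "jumps_by_valuation n ?g"
  show ?checks
  proof
    fix T assume "T \<in> bd_sets n"
    then obtain v k where "2 ^ v * (2 * k + 3) < (2::nat) ^ n" and T: "T = boundary_quad v k"
      unfolding mem_bd_sets_iff by blast
    moreover have odd_Suc: "2 * Suc k + 1 = 2 * k + 3" by simp
    ultimately have less: "2 ^ v * (2 * Suc k + 1) < (2::nat) ^ n" by metis
    have "2 ^ v * (2 * k + 1) \<le> (2::nat) ^ v * (2 * Suc k + 1)" by (rule mult_le_mono2) simp
    with less have "2 ^ v * (2 * k + 1) < (2::nat) ^ n" by linarith
    with less jumps have "jump ?g (2 ^ v * (2 * k + 1)) = jump ?g (2 ^ v)"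
      "jump ?g (2 ^ v * (2 * Suc k + 1)) = jump ?g (2 ^ v)"
      unfolding jumps_by_valuation_def by blast+
    then have "jump ?g (2 ^ v * (2 * k + 1)) = jump ?g (2 ^ v * (2 * Suc k + 1))" by blast
    then show "satisfies f T" unfolding T satisfies_boundary_quad_iff odd_Suc .
  qed
qed

lemma boundary_checks_iff_lin_bits:
  "(\<forall>T \<in> bd_sets n. satisfies f T) \<longleftrightarrow> (\<exists>e d. \<forall>u < 2 ^ n. f (int u + 1) = (e \<noteq> lin_bits n d u))"
proof
  assume "\<forall>T \<in> bd_sets n. satisfies f T"
  then have "jumps_by_valuation n (\<lambda>u. f (int u + 1))"
    by (simp add: boundary_checks_iff_jumps_by_valuation)
  then show "\<exists>e d. \<forall>u < 2 ^ n. f (int u + 1) = (e \<noteq> lin_bits n d u)"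
    by (rule jumps_by_valuation_imp_lin_bits)
next
  assume "\<exists>e d. \<forall>u < 2 ^ n. f (int u + 1) = (e \<noteq> lin_bits n d u)"
  then obtain e d where "\<forall>u < 2 ^ n. f (int u + 1) = (e \<noteq> lin_bits n d u)" by blast
  then have "jumps_by_valuation n (\<lambda>u. f (int u + 1)) =
      jumps_by_valuation n (\<lambda>u. e \<noteq> lin_bits n d u)"
    by (intro jumps_by_valuation_cong) simp
  then have "jumps_by_valuation n (\<lambda>u. f (int u + 1))"
    using jumps_by_valuation_lin_bits by simp
  then show "\<forall>T \<in> bd_sets n. satisfies f T"
    by (simp add: boundary_checks_iff_jumps_by_valuation)
qed

section \<open>The grid and the bulk checks\<close>

lemma cb_add_ca: "cb m + ca m = m"
  unfolding ca_def cb_def by simp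

lemma int_less_exp_iff: "int i < 2 ^ n \<longleftrightarrow> i < 2 ^ n"
  using of_nat_less_iff[of i "2 ^ n", where 'a = int] by simp

lemma int_mem_atLeastAtMost_iff: "(a::int) \<in> {1..2 ^ n} \<longleftrightarrow> (\<exists>i < 2 ^ n. a = int i + 1)"
proof
  assume "a \<in> {1..2 ^ n}"
  then have "int (nat (a - 1)) < 2 ^ n" "a = int (nat (a - 1)) + 1" by auto
  then show "\<exists>i < 2 ^ n. a = int i + 1" unfolding int_less_exp_iff by blast
next
  assume "\<exists>i < 2 ^ n. a = int i + 1"
  then obtain i where "int i < 2 ^ n" "a = int i + 1" unfolding int_less_exp_iff[symmetric] by blast
  then have "1 \<le> a" "a \<le> 2 ^ n" by linarith+
  then show "a \<in> {1..2 ^ n}" by simp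
qed

lemma mem_grid_iff:
  "p \<in> grid m \<longleftrightarrow> (\<exists>i j. i < 2 ^ cb m \<and> j < 2 ^ ca m \<and> p = (int i + 1, int j + 1))"
  unfolding grid_def mem_Times_iff int_mem_atLeastAtMost_iff by (cases p) auto

definition grid_square :: "nat \<Rightarrow> nat \<Rightarrow> (int \<times> int) set" where
  "grid_square i j = {(int i + 1, int j + 1), (int (Suc i) + 1, int j + 1),
                      (int i + 1, int (Suc j) + 1), (int (Suc i) + 1, int (Suc j) + 1)}"

lemma mem_bulk_checks_iff:
  "S \<in> bulk_checks m \<longleftrightarrow> (\<exists>i j. Suc i < 2 ^ cb m \<and> Suc j < 2 ^ ca m \<and> S = grid_square i j)"
proof
  assume "S \<in> bulk_checks m"
  then obtain a b where ab: "1 \<le> a" "a < 2 ^ cb m" "1 \<le> b" "b < 2 ^ ca m"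
    and S: "S = {(a, b), (a + 1, b), (a, b + 1), (a + 1, b + 1)}"
    unfolding bulk_checks_def by blast
  define i j where "i = nat (a - 1)" and "j = nat (b - 1)"
  have "int (Suc i) = a" "int (Suc j) = b"
    using ab by (simp_all add: i_def j_def)
  with ab have "int (Suc i) < 2 ^ cb m" "int (Suc j) < 2 ^ ca m"
    by simp_all
  then have "Suc i < 2 ^ cb m" "Suc j < 2 ^ ca m"
    by (simp_all only: int_less_exp_iff)
  moreover have "S = grid_square i j"
    unfolding S grid_square_def using ab by (simp add: i_def j_def)
  ultimately show "\<exists>i j. Suc i < 2 ^ cb m \<and> Suc j < 2 ^ ca m \<and> S = grid_square i j"
    by blast
next
  assume "\<exists>i j. Suc i < 2 ^ cb m \<and> Suc j < 2 ^ ca m \<and> S = grid_square i j"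
  then obtain i j where ij: "Suc i < 2 ^ cb m" "Suc j < 2 ^ ca m" and S: "S = grid_square i j"
    by blast
  have "int (Suc i) < 2 ^ cb m" "int (Suc j) < 2 ^ ca m"
    using ij by (simp_all only: int_less_exp_iff)
  then have "int i + 1 < 2 ^ cb m" "int j + 1 < 2 ^ ca m" by simp_all
  then show "S \<in> bulk_checks m"
    unfolding bulk_checks_def S grid_square_def
    by (intro CollectI exI[of _ "int i + 1"] exI[of _ "int j + 1"]) simp
qed

lemma satisfies_grid_square_iff:
  "satisfies x (grid_square i j) \<longleftrightarrow>
     (x (int i + 1, int j + 1) \<noteq> x (int (Suc i) + 1, int j + 1)) =
     (x (int i + 1, int (Suc j) + 1) \<noteq> x (int (Suc i) + 1, int (Suc j) + 1))"
  unfolding grid_square_def by (rule satisfies_four_iff) simp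

definition even_squares :: "nat \<Rightarrow> nat \<Rightarrow> (nat \<Rightarrow> nat \<Rightarrow> bool) \<Rightarrow> bool" where
  "even_squares R C f \<longleftrightarrow> (\<forall>i j. Suc i < R \<longrightarrow> Suc j < C \<longrightarrow>
     (f i j \<noteq> f (Suc i) j) = (f i (Suc j) \<noteq> f (Suc i) (Suc j)))"

lemma bulk_checks_iff_even_squares:
  "(\<forall>S \<in> bulk_checks m. satisfies x S) \<longleftrightarrow>
     even_squares (2 ^ cb m) (2 ^ ca m) (\<lambda>i j. x (int i + 1, int j + 1))"
proof -
  have "(\<forall>S \<in> bulk_checks m. satisfies x S) \<longleftrightarrow>
      (\<forall>i j. Suc i < 2 ^ cb m \<longrightarrow> Suc j < 2 ^ ca m \<longrightarrow> satisfies x (grid_square i j))"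
    unfolding Ball_def mem_bulk_checks_iff by blast
  then show ?thesis
    unfolding even_squares_def satisfies_grid_square_iff .
qed

lemma even_squares_imp_xor_decomp:
  assumes "even_squares R C f" "i < R" "j < C"
  shows "f i j = ((f i 0 \<noteq> f 0 j) \<noteq> f 0 0)"
proof -
  have rows: "(f i j \<noteq> f (Suc i) j) = (f i 0 \<noteq> f (Suc i) 0)" if "Suc i < R" "j < C" for i j
    using that(2)
  proof (induction j)
    case (Suc j)
    with assms(1) that(1) have "(f i j \<noteq> f (Suc i) j) = (f i (Suc j) \<noteq> f (Suc i) (Suc j))"
      unfolding even_squares_def by blast
    with Suc show ?case by simp
  qed simp
  show ?thesis
    using assms(2)
  proof (induction i)
    case (Suc i)
    with rows[of i j] assms(3) show ?case by auto
  qed auto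
qed

lemma hor_checks_iff:
  "(\<forall>S \<in> hor_checks m. satisfies x S) \<longleftrightarrow>
     (\<exists>e d. \<forall>j < 2 ^ ca m. x (1, int j + 1) = (e \<noteq> lin_bits (ca m) d j))"
proof -
  have "inj (\<lambda>j::int. (1::int, j))" by (rule injI) simp
  then have "(\<forall>S \<in> hor_checks m. satisfies x S) \<longleftrightarrow> (\<forall>T \<in> bd_sets (ca m). satisfies (\<lambda>j. x (1, j)) T)"
    unfolding hor_checks_def by (simp add: satisfies_image comp_def)
  then show ?thesis by (simp add: boundary_checks_iff_lin_bits)
qed

lemma ver_checks_iff:
  "(\<forall>S \<in> ver_checks m. satisfies x S) \<longleftrightarrow>
     (\<exists>e d. \<forall>i < 2 ^ cb m. x (int i + 1, 1) = (e \<noteq> lin_bits (cb m) d i))"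
proof -
  have "inj (\<lambda>i::int. (i, 1::int))" by (rule injI) simp
  then have "(\<forall>S \<in> ver_checks m. satisfies x S) \<longleftrightarrow> (\<forall>T \<in> bd_sets (cb m). satisfies (\<lambda>i. x (i, 1)) T)"
    unfolding ver_checks_def by (simp add: satisfies_image comp_def)
  then show ?thesis by (simp add: boundary_checks_iff_lin_bits)
qed

lemma mem_uRM_iff:
  "x \<in> uRM m \<longleftrightarrow> (\<forall>p. x p \<longrightarrow> p \<in> grid m)
     \<and> even_squares (2 ^ cb m) (2 ^ ca m) (\<lambda>i j. x (int i + 1, int j + 1))
     \<and> (\<exists>e d. \<forall>j < 2 ^ ca m. x (1, int j + 1) = (e \<noteq> lin_bits (ca m) d j))
     \<and> (\<exists>e d. \<forall>i < 2 ^ cb m. x (int i + 1, 1) = (e \<noteq> lin_bits (cb m) d i))"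
  unfolding uRM_def all_checks_def ball_Un
  by (simp add: bulk_checks_iff_even_squares hor_checks_iff ver_checks_iff)

definition grid_to_vec :: "nat \<Rightarrow> int \<times> int \<Rightarrow> bool list" where
  "grid_to_vec m p =
     map (bit (nat (fst p - 1))) [0..<cb m] @ map (bit (nat (snd p - 1))) [0..<ca m]"

lemma horner_sum_map_bit: "u < 2 ^ n \<Longrightarrow> horner_sum of_bool 2 (map (bit u) [0..<n]) = (u::nat)"
  by (simp add: horner_sum_bit_eq_take_bit take_bit_nat_eq_self_iff)

lemma map_bit_horner_sum: "map (bit (horner_sum of_bool 2 bs :: nat)) [0..<length bs] = bs"
  by (rule nth_equalityI) (simp_all add: bit_horner_sum_bit_iff)

definition vec_to_grid :: "nat \<Rightarrow> bool list \<Rightarrow> int \<times> int" where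
  "vec_to_grid m v = (int (horner_sum of_bool 2 (take (cb m) v)) + 1,
                      int (horner_sum of_bool 2 (drop (cb m) v)) + 1)"

lemma bij_betw_grid_to_vec: "bij_betw (grid_to_vec m) (grid m) (vecs m)"
proof (rule bij_betw_byWitness[where f' = "vec_to_grid m"])
  show "\<forall>p \<in> grid m. vec_to_grid m (grid_to_vec m p) = p"
    by (auto simp: mem_grid_iff grid_to_vec_def vec_to_grid_def horner_sum_map_bit)
  show "grid_to_vec m ` grid m \<subseteq> vecs m"
    using cb_add_ca[of m] by (auto simp: grid_to_vec_def vecs_def)
  have split_lengths: "length (take (cb m) v) = cb m" "length (drop (cb m) v) = ca m"
    if "v \<in> vecs m" for v
    using that cb_add_ca[of m] by (auto simp: vecs_def)
  show "\<forall>v \<in> vecs m. grid_to_vec m (vec_to_grid m v) = v"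
  proof
    fix v assume "v \<in> vecs m"
    then show "grid_to_vec m (vec_to_grid m v) = v"
      using map_bit_horner_sum[of "take (cb m) v"] map_bit_horner_sum[of "drop (cb m) v"]
      unfolding grid_to_vec_def vec_to_grid_def split_lengths[OF \<open>v \<in> vecs m\<close>] by simp
  qed
  show "vec_to_grid m ` vecs m \<subseteq> grid m"
  proof
    fix p assume "p \<in> vec_to_grid m ` vecs m"
    then obtain v where "v \<in> vecs m" and p: "p = vec_to_grid m v" by blast
    then have "horner_sum of_bool 2 (take (cb m) v) < (2::nat) ^ cb m"
      "horner_sum of_bool 2 (drop (cb m) v) < (2::nat) ^ ca m"
      using horner_sum_bound[of "take (cb m) v", where 'a = nat]
        horner_sum_bound[of "drop (cb m) v", where 'a = nat]
      unfolding split_lengths[OF \<open>v \<in> vecs m\<close>] by simp_all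
    then show "p \<in> grid m" unfolding p vec_to_grid_def mem_grid_iff by blast
  qed
qed

lemma dotF2_grid_to_vec:
  assumes "length c = m"
  shows "dotF2 c (grid_to_vec m (int i + 1, int j + 1))
    = (lin_bits (cb m) ((!) c) i \<noteq> lin_bits (ca m) (\<lambda>k. c ! (cb m + k)) j)"
proof -
  have "dotF2 c (grid_to_vec m (int i + 1, int j + 1))
      = parity (cb m + ca m) (\<lambda>k. c ! k \<and> grid_to_vec m (int i + 1, int j + 1) ! k)"
    unfolding dotF2_eq_parity assms cb_add_ca ..
  also have "\<dots> = (lin_bits (cb m) ((!) c) i \<noteq> lin_bits (ca m) (\<lambda>k. c ! (cb m + k)) j)"
    unfolding parity_add lin_bits_def
    by (intro arg_cong2[where f = "(\<noteq>)"] parity_cong) (simp_all add: grid_to_vec_def nth_append)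
  finally show ?thesis .
qed

section \<open>Relabelling and minimum distance\<close>

definition relabel :: "'a set \<Rightarrow> ('a \<Rightarrow> 'b) \<Rightarrow> ('b \<Rightarrow> bool) \<Rightarrow> 'a \<Rightarrow> bool" where
  "relabel A \<pi> y p \<longleftrightarrow> p \<in> A \<and> y (\<pi> p)"

lemma hdist_relabel:
  assumes "bij_betw \<pi> A B" "\<And>v. y v \<Longrightarrow> v \<in> B" "\<And>v. z v \<Longrightarrow> v \<in> B"
  shows "hdist (relabel A \<pi> y) (relabel A \<pi> z) = hdist y z"
proof -
  have diff: "{p. relabel A \<pi> y p \<noteq> relabel A \<pi> z p} = {p \<in> A. y (\<pi> p) \<noteq> z (\<pi> p)}"
    by (auto simp: relabel_def)
  have "\<pi> ` {p \<in> A. y (\<pi> p) \<noteq> z (\<pi> p)} = {v \<in> \<pi> ` A. y v \<noteq> z v}"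
    by auto
  also have "\<dots> = {v. y v \<noteq> z v}"
    using assms by (auto simp: bij_betw_imp_surj_on[OF assms(1)])
  finally have "bij_betw \<pi> {p \<in> A. y (\<pi> p) \<noteq> z (\<pi> p)} {v. y v \<noteq> z v}"
    by (intro bij_betw_subset[OF assms(1)]) auto
  then show ?thesis
    unfolding hdist_def diff by (rule bij_betw_same_card)
qed

lemma inj_on_relabel:
  assumes "bij_betw \<pi> A B"
  shows "inj_on (relabel A \<pi>) {y. \<forall>v. y v \<longrightarrow> v \<in> B}"
proof (rule inj_onI, rule ext)
  fix y z v
  assume "y \<in> {y. \<forall>v. y v \<longrightarrow> v \<in> B}" "z \<in> {y. \<forall>v. y v \<longrightarrow> v \<in> B}"
    and eq: "relabel A \<pi> y = relabel A \<pi> z"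
  show "y v = z v"
  proof (cases "v \<in> B")
    case True
    then obtain p where "p \<in> A" "v = \<pi> p"
      using bij_betw_imp_surj_on[OF assms] by blast
    moreover from eq have "relabel A \<pi> y p = relabel A \<pi> z p" by simp
    ultimately show ?thesis unfolding relabel_def by simp
  qed (use \<open>y \<in> _\<close> \<open>z \<in> _\<close> in auto)
qed

lemma min_dist_eqI:
  assumes "finite C" "\<And>x y. x \<in> C \<Longrightarrow> y \<in> C \<Longrightarrow> x \<noteq> y \<Longrightarrow> d \<le> hdist x y"
    and "x \<in> C" "y \<in> C" "x \<noteq> y" "hdist x y = d"
  shows "min_dist C = d"
  unfolding min_dist_def
proof (rule Min_eqI)
  have "{hdist x y | x y. x \<in> C \<and> y \<in> C \<and> x \<noteq> y} \<subseteq> (\<lambda>(x, y). hdist x y) ` (C \<times> C)"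
    by fastforce
  with assms(1) show "finite {hdist x y | x y. x \<in> C \<and> y \<in> C \<and> x \<noteq> y}"
    by (simp add: finite_subset)
qed (use assms in blast)+

lemma min_dist_image:
  assumes "inj_on f C" "\<And>x y. x \<in> C \<Longrightarrow> y \<in> C \<Longrightarrow> hdist (f x) (f y) = hdist x y"
  shows "min_dist (f ` C) = min_dist C"
proof -
  have "{hdist x y | x y. x \<in> f ` C \<and> y \<in> f ` C \<and> x \<noteq> y}
      = {hdist x y | x y. x \<in> C \<and> y \<in> C \<and> x \<noteq> y}"
  proof (intro equalityI subsetI)
    fix d assume "d \<in> {hdist x y | x y. x \<in> f ` C \<and> y \<in> f ` C \<and> x \<noteq> y}"
    then obtain x y where "x \<in> C" "y \<in> C" "x \<noteq> y" "d = hdist (f x) (f y)"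
      by blast
    with assms(2) show "d \<in> {hdist x y | x y. x \<in> C \<and> y \<in> C \<and> x \<noteq> y}" by auto
  next
    fix d assume "d \<in> {hdist x y | x y. x \<in> C \<and> y \<in> C \<and> x \<noteq> y}"
    then obtain x y where "x \<in> C" "y \<in> C" "x \<noteq> y" "d = hdist x y"
      by blast
    moreover from this have "f x \<noteq> f y" using inj_on_eq_iff[OF assms(1)] by simp
    ultimately show "d \<in> {hdist x y | x y. x \<in> f ` C \<and> y \<in> f ` C \<and> x \<noteq> y}"
      using assms(2) by (intro CollectI exI[of _ "f x"] exI[of _ "f y"]) simp
  qed
  then show ?thesis unfolding min_dist_def by simp
qed

lemma min_dist_relabel:
  assumes "bij_betw \<pi> A B" "C \<subseteq> {y. \<forall>v. y v \<longrightarrow> v \<in> B}"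
  shows "min_dist (relabel A \<pi> ` C) = min_dist C"
proof (rule min_dist_image)
  show "inj_on (relabel A \<pi>) C"
    using inj_on_relabel[OF assms(1)] assms(2) by (rule inj_on_subset)
  show "hdist (relabel A \<pi> x) (relabel A \<pi> y) = hdist x y" if "x \<in> C" "y \<in> C" for x y
    using that assms(2) by (intro hdist_relabel[OF assms(1)]) auto
qed

section \<open>First-order Reed--Muller codes\<close>

definition rm_word :: "nat \<Rightarrow> bool \<Rightarrow> bool list \<Rightarrow> bool list \<Rightarrow> bool" where
  "rm_word m c0 c = (\<lambda>v. if v \<in> vecs m then c0 \<noteq> dotF2 c v else False)"

lemma RM1_eq_rm_words: "RM1 m = (\<lambda>(c0, c). rm_word m c0 c) ` (UNIV \<times> vecs m)"
  unfolding RM1_def rm_word_def vecs_def by auto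

lemma mem_RM1_iff: "y \<in> RM1 m \<longleftrightarrow> (\<exists>c0 c. length c = m \<and> y = rm_word m c0 c)"
  unfolding RM1_def rm_word_def by simp

lemma finite_vecs: "finite (vecs m)"
  unfolding vecs_def using finite_lists_length_eq[of "UNIV :: bool set" m] by simp

lemma card_vecs: "card (vecs m) = 2 ^ m"
  unfolding vecs_def using card_lists_length_eq[of "UNIV :: bool set" m] by simp

lemma card_parity_eq_half:
  assumes "i0 < m" "d i0"
  shows "card {v \<in> vecs m. e \<noteq> parity m (\<lambda>i. d i \<and> v ! i)} = 2 ^ (m - 1)"
proof -
  define A where "A = {v \<in> vecs m. e \<noteq> parity m (\<lambda>i. d i \<and> v ! i)}"
  define B where "B = {v \<in> vecs m. e = parity m (\<lambda>i. d i \<and> v ! i)}"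
  define flip where "flip v = v[i0 := \<not> v ! i0]" for v :: "bool list"
  have flip_vecs: "flip v \<in> vecs m" if "v \<in> vecs m" for v
    using that by (simp add: flip_def vecs_def)
  have flip_flip: "flip (flip v) = v" if "v \<in> vecs m" for v
    using that assms(1) by (simp add: flip_def vecs_def list_update_same_conv)
  have parity_flip: "parity m (\<lambda>i. d i \<and> flip v ! i) = (\<not> parity m (\<lambda>i. d i \<and> v ! i))"
    if "v \<in> vecs m" for v
  proof -
    have "(parity m (\<lambda>i. d i \<and> flip v ! i) \<noteq> parity m (\<lambda>i. d i \<and> v ! i)) =
        parity m (\<lambda>i. d i \<and> i = i0)"
      unfolding parity_neq using that assms(1)
      by (intro parity_cong) (auto simp: flip_def vecs_def nth_list_update)
    with assms show ?thesis by (simp add: parity_eq_single)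
  qed
  have "bij_betw flip A B"
    by (rule bij_betw_byWitness[where f' = flip])
      (auto simp: A_def B_def flip_vecs flip_flip parity_flip)
  then have "card A = card B" by (rule bij_betw_same_card)
  moreover have "card A + card B = 2 ^ m"
  proof -
    have "A \<union> B = vecs m" "A \<inter> B = {}" "finite A" "finite B"
      unfolding A_def B_def using finite_vecs by auto
    then show ?thesis using card_Un_disjoint[of A B] card_vecs[of m] by simp
  qed
  moreover have "(2::nat) ^ m = 2 * 2 ^ (m - 1)" using assms(1) by (cases m) auto
  ultimately show ?thesis unfolding A_def by simp
qed

lemma hdist_rm_word:
  assumes "length a = m" "length b = m"
  shows "hdist (rm_word m a0 a) (rm_word m b0 b)
    = card {v \<in> vecs m. (a0 \<noteq> b0) \<noteq> parity m (\<lambda>i. (a ! i \<noteq> b ! i) \<and> v ! i)}"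
proof -
  have "(dotF2 a v \<noteq> dotF2 b v) = parity m (\<lambda>i. (a ! i \<noteq> b ! i) \<and> v ! i)" for v
    unfolding dotF2_eq_parity assms parity_neq by (rule parity_cong) auto
  then have "{v. rm_word m a0 a v \<noteq> rm_word m b0 b v}
      = {v \<in> vecs m. (a0 \<noteq> b0) \<noteq> parity m (\<lambda>i. (a ! i \<noteq> b ! i) \<and> v ! i)}"
    unfolding rm_word_def by auto
  then show ?thesis unfolding hdist_def by simp
qed

lemma hdist_rm_word_of_neq:
  assumes "length a = m" "length b = m" "a \<noteq> b"
  shows "hdist (rm_word m a0 a) (rm_word m b0 b) = 2 ^ (m - 1)"
proof -
  obtain i0 where "i0 < m" "a ! i0 \<noteq> b ! i0"
    using assms(3) nth_equalityI[of a b] assms(1,2) by auto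
  then show ?thesis
    unfolding hdist_rm_word[OF assms(1,2)] by (rule card_parity_eq_half)
qed

lemma hdist_rm_word_same_linear_part:
  assumes "length a = m" "a0 \<noteq> b0"
  shows "hdist (rm_word m a0 a) (rm_word m b0 a) = 2 ^ m"
  unfolding hdist_rm_word[OF assms(1) assms(1)] using assms(2) by (simp add: card_vecs)

lemma hdist_rm_word_ge:
  assumes "length a = m" "length b = m" "(a0, a) \<noteq> (b0, b)"
  shows "2 ^ (m - 1) \<le> hdist (rm_word m a0 a) (rm_word m b0 b)"
proof (cases "a = b")
  case True
  with assms have "hdist (rm_word m a0 a) (rm_word m b0 b) = 2 ^ m"
    using hdist_rm_word_same_linear_part by simp
  then show ?thesis by simp
qed (simp add: hdist_rm_word_of_neq assms)

lemma inj_on_rm_word: "inj_on (\<lambda>(c0, c). rm_word m c0 c) (UNIV \<times> vecs m)"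
proof (rule inj_onI, rule ccontr)
  fix x y assume "x \<in> UNIV \<times> vecs m" "y \<in> UNIV \<times> vecs m" "x \<noteq> y"
    and eq: "(\<lambda>(c0, c). rm_word m c0 c) x = (\<lambda>(c0, c). rm_word m c0 c) y"
  then obtain a0 a b0 b where "x = (a0, a)" "y = (b0, b)" "length a = m" "length b = m"
    by (auto simp: vecs_def)
  with \<open>x \<noteq> y\<close> have "2 ^ (m - 1) \<le> hdist (rm_word m a0 a) (rm_word m b0 b)"
    by (intro hdist_rm_word_ge) auto
  moreover have "hdist (rm_word m a0 a) (rm_word m b0 b) = 0"
    using eq \<open>x = (a0, a)\<close> \<open>y = (b0, b)\<close> by (simp add: hdist_def)
  ultimately show False by simp
qed

lemma card_RM1: "card (RM1 m) = 2 ^ (m + 1)"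
  unfolding RM1_eq_rm_words card_image[OF inj_on_rm_word] card_cartesian_product card_vecs
  by simp

lemma min_dist_RM1:
  assumes "1 \<le> m"
  shows "min_dist (RM1 m) = 2 ^ (m - 1)"
proof -
  let ?x = "rm_word m False (replicate m False)" and ?y = "rm_word m False (replicate m True)"
  have "replicate m False \<noteq> replicate m True" using assms by (cases m) auto
  then have dist: "hdist ?x ?y = 2 ^ (m - 1)" by (intro hdist_rm_word_of_neq) auto
  show ?thesis
  proof (rule min_dist_eqI[OF _ _ _ _ _ dist])
    show "finite (RM1 m)" unfolding RM1_eq_rm_words by (simp add: finite_vecs)
    show "?x \<in> RM1 m" "?y \<in> RM1 m" unfolding mem_RM1_iff by force+
    show "?x \<noteq> ?y"
    proof
      assume "?x = ?y"
      then have "hdist ?x ?y = 0" by (simp add: hdist_def)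
      with dist show False by simp
    qed
    show "2 ^ (m - 1) \<le> hdist x y" if "x \<in> RM1 m" "y \<in> RM1 m" "x \<noteq> y" for x y
    proof -
      obtain a0 a b0 b where "length a = m" "length b = m"
        and xy: "x = rm_word m a0 a" "y = rm_word m b0 b"
        using \<open>x \<in> RM1 m\<close> \<open>y \<in> RM1 m\<close> unfolding mem_RM1_iff by blast
      moreover have "(a0, a) \<noteq> (b0, b)" using \<open>x \<noteq> y\<close> xy by auto
      ultimately show ?thesis using hdist_rm_word_ge by simp
    qed
  qed
qed

section \<open>uRM(m) as a relabelling of RM(1,m)\<close>

lemma relabel_rm_word_grid_point:
  assumes "length c = m" "i < 2 ^ cb m" "j < 2 ^ ca m"
  shows "relabel (grid m) (grid_to_vec m) (rm_word m c0 c) (int i + 1, int j + 1)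
    = ((c0 \<noteq> lin_bits (cb m) ((!) c) i) \<noteq> lin_bits (ca m) (\<lambda>k. c ! (cb m + k)) j)"
proof -
  have "(int i + 1, int j + 1) \<in> grid m" unfolding mem_grid_iff using assms(2,3) by blast
  moreover from this have "grid_to_vec m (int i + 1, int j + 1) \<in> vecs m"
    using bij_betw_apply[OF bij_betw_grid_to_vec] by blast
  ultimately show ?thesis
    unfolding relabel_def rm_word_def dotF2_grid_to_vec[OF assms(1)] by auto
qed

lemma relabel_rm_word_mem_uRM:
  assumes "length c = m"
  shows "relabel (grid m) (grid_to_vec m) (rm_word m c0 c) \<in> uRM m"
  unfolding mem_uRM_iff
proof (intro conjI)
  let ?x = "relabel (grid m) (grid_to_vec m) (rm_word m c0 c)"
  let ?r = "lin_bits (cb m) ((!) c)" and ?s = "lin_bits (ca m) (\<lambda>k. c ! (cb m + k))"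
  have x: "?x (int i + 1, int j + 1) = ((c0 \<noteq> ?r i) \<noteq> ?s j)"
    if "i < 2 ^ cb m" "j < 2 ^ ca m" for i j
    using relabel_rm_word_grid_point[OF assms that] .
  show "\<forall>p. ?x p \<longrightarrow> p \<in> grid m" by (simp add: relabel_def)
  show "even_squares (2 ^ cb m) (2 ^ ca m) (\<lambda>i j. ?x (int i + 1, int j + 1))"
    unfolding even_squares_def
  proof (intro allI impI)
    fix i j assume "Suc i < 2 ^ cb m" "Suc j < 2 ^ ca m"
    then show "(?x (int i + 1, int j + 1) \<noteq> ?x (int (Suc i) + 1, int j + 1)) =
        (?x (int i + 1, int (Suc j) + 1) \<noteq> ?x (int (Suc i) + 1, int (Suc j) + 1))"
      using x[of i j] x[of "Suc i" j] x[of i "Suc j"] x[of "Suc i" "Suc j"] by auto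
  qed
  show "\<exists>e d. \<forall>j < 2 ^ ca m. ?x (1, int j + 1) = (e \<noteq> lin_bits (ca m) d j)"
    using x[of 0] by (intro exI allI impI) simp
  show "\<exists>e d. \<forall>i < 2 ^ cb m. ?x (int i + 1, 1) = (e \<noteq> lin_bits (cb m) d i)"
    using x[of _ 0] by (intro exI allI impI) simp
qed

lemma uRM_imp_relabel_rm_word:
  assumes "x \<in> uRM m"
  obtains c0 c where "length c = m" "x = relabel (grid m) (grid_to_vec m) (rm_word m c0 c)"
proof -
  obtain e d e' d' where supp: "\<And>p. x p \<Longrightarrow> p \<in> grid m"
    and even: "even_squares (2 ^ cb m) (2 ^ ca m) (\<lambda>i j. x (int i + 1, int j + 1))"
    and top: "\<And>j. j < 2 ^ ca m \<Longrightarrow> x (1, int j + 1) = (e \<noteq> lin_bits (ca m) d j)"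
    and left: "\<And>i. i < 2 ^ cb m \<Longrightarrow> x (int i + 1, 1) = (e' \<noteq> lin_bits (cb m) d' i)"
    using assms unfolding mem_uRM_iff by blast
  define c where "c = map d' [0..<cb m] @ map d [0..<ca m]"
  have c: "length c = m" unfolding c_def using cb_add_ca[of m] by simp
  have "lin_bits (cb m) ((!) c) i = lin_bits (cb m) d' i" for i
    by (rule lin_bits_cong) (simp add: c_def nth_append)
  moreover have "lin_bits (ca m) (\<lambda>k. c ! (cb m + k)) j = lin_bits (ca m) d j" for j
    by (rule lin_bits_cong) (simp add: c_def nth_append)
  ultimately have rm_word_value:
      "relabel (grid m) (grid_to_vec m) (rm_word m e c) (int i + 1, int j + 1)
        = ((e \<noteq> lin_bits (cb m) d' i) \<noteq> lin_bits (ca m) d j)"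
    if "i < 2 ^ cb m" "j < 2 ^ ca m" for i j
    using relabel_rm_word_grid_point[OF c that] by simp
  have "e' = e" using top[of 0] left[of 0] by simp
  have "x p = relabel (grid m) (grid_to_vec m) (rm_word m e c) p" for p
  proof (cases "p \<in> grid m")
    case True
    then obtain i j where ij: "i < 2 ^ cb m" "j < 2 ^ ca m" and p: "p = (int i + 1, int j + 1)"
      unfolding mem_grid_iff by blast
    have "x p = ((x (int i + 1, 1) \<noteq> x (1, int j + 1)) \<noteq> x (1, 1))"
      using even_squares_imp_xor_decomp[OF even ij] unfolding p by simp
    with ij show ?thesis
      unfolding p rm_word_value[OF ij] using top left top[of 0] \<open>e' = e\<close> by auto
  next
    case False
    with supp[of p] show ?thesis by (auto simp: relabel_def)
  qed
  with c that show ?thesis by blast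
qed

lemma uRM_eq_relabel_RM1: "uRM m = relabel (grid m) (grid_to_vec m) ` RM1 m"
proof (intro equalityI subsetI)
  fix x assume "x \<in> uRM m"
  then obtain c0 c where "length c = m" "x = relabel (grid m) (grid_to_vec m) (rm_word m c0 c)"
    by (rule uRM_imp_relabel_rm_word)
  then show "x \<in> relabel (grid m) (grid_to_vec m) ` RM1 m"
    using mem_RM1_iff by blast
next
  fix x assume "x \<in> relabel (grid m) (grid_to_vec m) ` RM1 m"
  then obtain y where "y \<in> RM1 m" "x = relabel (grid m) (grid_to_vec m) y" by blast
  then obtain c0 c where "length c = m" "x = relabel (grid m) (grid_to_vec m) (rm_word m c0 c)"
    unfolding mem_RM1_iff by blast
  then show "x \<in> uRM m" using relabel_rm_word_mem_uRM by simp
qed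

theorem theorem1:
  fixes m :: nat
  assumes "m \<ge> 2"
  shows "(\<exists>\<pi>. bij_betw \<pi> (grid m) (vecs m) \<and>
            uRM m = (\<lambda>y p. if p \<in> grid m then y (\<pi> p) else False) ` RM1 m)
         \<and> card (grid m) = 2 ^ m
         \<and> card (uRM m) = 2 ^ (m + 1)
         \<and> min_dist (uRM m) = 2 ^ (m - 1)"
proof -
  have bij: "bij_betw (grid_to_vec m) (grid m) (vecs m)" by (rule bij_betw_grid_to_vec)
  have supp: "RM1 m \<subseteq> {y. \<forall>v. y v \<longrightarrow> v \<in> vecs m}" unfolding RM1_def by auto
  have relabel_eq:
    "(\<lambda>y p. if p \<in> grid m then y (grid_to_vec m p) else False) = relabel (grid m) (grid_to_vec m)"
    by (auto simp: fun_eq_iff relabel_def)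
  have "\<exists>\<pi>. bij_betw \<pi> (grid m) (vecs m) \<and>
            uRM m = (\<lambda>y p. if p \<in> grid m then y (\<pi> p) else False) ` RM1 m"
  proof (intro exI[of _ "grid_to_vec m"] conjI)
    show "uRM m = (\<lambda>y p. if p \<in> grid m then y (grid_to_vec m p) else False) ` RM1 m"
      unfolding relabel_eq by (rule uRM_eq_relabel_RM1)
  qed (rule bij)
  moreover have "card (grid m) = 2 ^ m"
    using bij_betw_same_card[OF bij] by (simp add: card_vecs)
  moreover have "card (uRM m) = 2 ^ (m + 1)"
    unfolding uRM_eq_relabel_RM1 card_image[OF inj_on_subset[OF inj_on_relabel[OF bij] supp]]
    by (rule card_RM1)
  moreover have "min_dist (uRM m) = 2 ^ (m - 1)"
    unfolding uRM_eq_relabel_RM1 min_dist_relabel[OF bij supp]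
    using assms by (simp add: min_dist_RM1)
  ultimately show ?thesis by blast
qed

end
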